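(* Let $y_0\in E$ and let $u$ be a positive solution of $0=\tfrac12b^2u''+\tilde au'+\eta u-u^2-d\frac{(u')^2}{u}$ on $[y_0,\infty)$ with $u(y)/\eta(y)\to1$ as $y\to\infty$ and $u\le\eta$ for all sufficiently large $y$. Assume that on $[y_0,\infty)$, $\eta\in C^2$, $\eta>0$, $\bar a:=\frac{\tilde a}{\eta}+(b^2-2d)\frac{\eta'}{\eta^2}\le0$, and that $\Psi\eta$ is increasing and concave on $[y_0,\infty)$. Then $u\le\eta\,\Psi\eta$ for all sufficiently large $y$.
   Context: $E=(E_-,\infty)$ with $E_-\in\{-\infty\}\cup\mathbb R$. $r,\lambda,\sigma,a,b,\rho,\delta:E\to\mathbb R$ are locally Lipschitz with $\sigma>0$, $b(y)\neq0$, $\rho(y)\in[-1,1]$; $R\in(0,\infty)\setminus\{1\}$. Define $\eta=\frac1R\big(\delta-(1-R)(r+\frac{\lambda^2}{2R})\big)$, $\tilde a=a+\frac{1-R}{R}\rho\lambda b$, $d=\frac12b^2((1-\rho^2)R+\rho^2+1)$, and for positive $g\in C^2$, $\Psi g=1+\frac{\frac12b^2g''+\tilde ag'}{g^2}-d\frac{(g')^2}{g^3}$. *)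

theory Defs
  imports "HOL-Analysis.Analysis"
begin

definition stateE :: "ereal \<Rightarrow> real set" where
  "stateE Em = {y. Em < ereal y}"

definition loc_lipschitz_on :: "real set \<Rightarrow> (real \<Rightarrow> real) \<Rightarrow> bool" where
  "loc_lipschitz_on S f \<longleftrightarrow>
     (\<forall>x\<in>S. \<exists>e>0. \<exists>L. \<forall>y\<in>ball x e \<inter> S. \<forall>z\<in>ball x e \<inter> S. \<bar>f y - f z\<bar> \<le> L * \<bar>y - z\<bar>)"

definition eta_fun :: "real \<Rightarrow> (real \<Rightarrow> real) \<Rightarrow> (real \<Rightarrow> real) \<Rightarrow> (real \<Rightarrow> real) \<Rightarrow> real \<Rightarrow> real" where
  "eta_fun R \<delta> r lam y = (1 / R) * (\<delta> y - (1 - R) * (r y + (lam y)\<^sup>2 / (2 * R)))"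

definition atilde_fun :: "real \<Rightarrow> (real \<Rightarrow> real) \<Rightarrow> (real \<Rightarrow> real) \<Rightarrow> (real \<Rightarrow> real) \<Rightarrow> (real \<Rightarrow> real) \<Rightarrow> real \<Rightarrow> real" where
  "atilde_fun R a \<rho> lam b y = a y + ((1 - R) / R) * \<rho> y * lam y * b y"

definition d_fun :: "real \<Rightarrow> (real \<Rightarrow> real) \<Rightarrow> (real \<Rightarrow> real) \<Rightarrow> real \<Rightarrow> real" where
  "d_fun R b \<rho> y = (1/2) * (b y)\<^sup>2 * ((1 - (\<rho> y)\<^sup>2) * R + (\<rho> y)\<^sup>2 + 1)"

definition Psi_op :: "(real \<Rightarrow> real) \<Rightarrow> (real \<Rightarrow> real) \<Rightarrow> (real \<Rightarrow> real) \<Rightarrow> (real \<Rightarrow> real) \<Rightarrow> real \<Rightarrow> real" where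
  "Psi_op b atl d g y =
     1 + ((1/2) * (b y)\<^sup>2 * deriv (deriv g) y + atl y * deriv g y) / (g y)\<^sup>2
       - d y * (deriv g y)\<^sup>2 / (g y) ^ 3"

end

theory Submission
  imports Defs
begin

(* With v = u / \<eta> and P = \<Psi>\<eta>, the equation for u becomes
     b\<^sup>2 v'' = 2 \<eta> (v (v - P) - abar v' + d v'\<^sup>2 / (\<eta> v)),
   so, as abar \<le> 0 and d \<ge> 0, v'' > 0 wherever v > P and v' \<ge> 0.
   If v > P for arbitrarily large y, there is an m with v m > P m and v' m \<ge> 0 such that v > P
   wherever v lies above its tangent at m: either v > P eventually, and then v' \<ge> 0 somewhere
   because v \<le> 1 cannot decrease to its limit 1; or m maximises v - P on some [p0, p] with
   v p0 \<le> P p0, and concavity and monotonicity of P give P t \<le> P m + v' m (t - m) with v' m \<ge> 0.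
   Beyond such an m, v' never returns to v' m, so v grows to infinity instead of tending to 1. *)

lemma continuous_on_first_le:
  fixes f :: "real \<Rightarrow> real"
  assumes "continuous_on {a..b} f" "a \<le> b" "f b \<le> c"
  obtains s where "a \<le> s" "s \<le> b" "f s \<le> c" "\<And>y. a \<le> y \<Longrightarrow> y < s \<Longrightarrow> c < f y"
proof -
  define K where "K = {y \<in> {a..b}. f y \<le> c}"
  have "closed K"
    unfolding K_def using assms(1)
    by (intro continuous_on_closed_Collect_le continuous_on_const closed_atLeastAtMost)
  moreover have "b \<in> K" and bdd: "bdd_below K"
    using assms(2,3) unfolding K_def by (auto intro: bdd_belowI[of _ a])
  ultimately have "Inf K \<in> K"
    using closed_contains_Inf by blast
  moreover have "c < f y" if "a \<le> y" "y < Inf K" for y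
  proof -
    have "y \<notin> K" using that(2) cInf_lower[OF _ bdd] by force
    moreover have "y \<le> b" using that(2) cInf_lower[OF \<open>b \<in> K\<close> bdd] by linarith
    ultimately show ?thesis using that(1) unfolding K_def by auto
  qed
  ultimately show thesis
    using that[of "Inf K"] unfolding K_def by auto
qed

lemma DERIV_ge_imp_increment_ge:
  fixes f f' :: "real \<Rightarrow> real"
  assumes "a \<le> b" and deriv: "\<And>x. a \<le> x \<Longrightarrow> x \<le> b \<Longrightarrow> (f has_real_derivative f' x) (at x)"
    and ge: "\<And>x. a < x \<Longrightarrow> x < b \<Longrightarrow> c \<le> f' x"
  shows "f a + c * (b - a) \<le> f b"
proof (cases "a = b")
  case False
  then have "\<exists>z. a < z \<and> z < b \<and> f b - f a = (b - a) * f' z"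
    using \<open>a \<le> b\<close> by (intro MVT2 deriv) auto
  then obtain z where z: "a < z" "z < b" "f b - f a = (b - a) * f' z"
    by blast
  have "(b - a) * c \<le> (b - a) * f' z"
    using ge z(1,2) \<open>a \<le> b\<close> by (intro mult_left_mono) auto
  then show ?thesis
    using z(3) mult.commute[of c "b - a"] by linarith
qed simp

lemma DERIV_pos_while_above_imp_above:
  fixes f f' :: "real \<Rightarrow> real"
  assumes deriv: "\<And>x. x \<ge> m \<Longrightarrow> (f has_real_derivative f' x) (at x)"
    and pos: "\<And>s. s \<ge> m \<Longrightarrow> \<forall>y\<in>{m<..<s}. f y > f m \<Longrightarrow> f' s > 0"
    and "m < t"
  shows "f m < f t"
proof (rule ccontr)
  assume not_above: "\<not> f m < f t"
  obtain \<delta> where \<delta>: "\<delta> > 0" "\<And>h. 0 < h \<Longrightarrow> h < \<delta> \<Longrightarrow> f m < f (m + h)"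
    using DERIV_pos_inc_right[OF deriv pos] by force
  have "m + \<delta> \<le> t"
    using \<delta>(2)[of "t - m"] not_above \<open>m < t\<close> by force
  \<comment> \<open>s is the first point after m + \<delta>/2 where f is back at level f m; f is approached from
    above there, which contradicts f' s > 0.\<close>
  have "continuous_on {m + \<delta>/2..t} f"
    using \<delta>(1) by (intro continuous_at_imp_continuous_on) (auto intro!: DERIV_isCont[OF deriv])
  moreover have "m + \<delta>/2 \<le> t" using \<open>m + \<delta> \<le> t\<close> \<delta>(1) by linarith
  moreover have "f t \<le> f m" using not_above by simp
  ultimately obtain s where s: "m + \<delta>/2 \<le> s" "s \<le> t" "f s \<le> f m"
    "\<And>y. m + \<delta>/2 \<le> y \<Longrightarrow> y < s \<Longrightarrow> f m < f y"
    by (rule continuous_on_first_le) blast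
  have above: "f m < f y" if "y \<in> {m<..<s}" for y
  proof (cases "y < m + \<delta>")
    case True
    then show ?thesis using \<delta>(2)[of "y - m"] that by simp
  next
    case False
    then show ?thesis using s(4)[of y] that \<delta>(1) by simp
  qed
  have "m < s" using s(1) \<delta>(1) by linarith
  then have "f' s > 0" using pos above by auto
  then obtain e where e: "e > 0" "\<And>h. 0 < h \<Longrightarrow> h < e \<Longrightarrow> f (s - h) < f s"
    using DERIV_pos_inc_left[OF deriv] \<open>m < s\<close> by (meson less_imp_le)
  define h where "h = min (e/2) ((s - m)/2)"
  have h: "0 < h" "h < e" "h \<le> (s - m)/2"
    using e(1) \<open>m < s\<close> unfolding h_def by (auto simp: min_def)
  then have "f (s - h) < f s" by (intro e(2))
  moreover have "s - h \<in> {m<..<s}" using h \<open>m < s\<close> by auto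
  then have "f m < f (s - h)" by (rule above)
  ultimately show False using s(3) by linarith
qed

lemma DERIV_ge_pos_imp_filterlim_at_top:
  fixes f f' :: "real \<Rightarrow> real"
  assumes deriv: "\<And>x. x \<ge> a \<Longrightarrow> (f has_real_derivative f' x) (at x)"
    and ge: "\<And>x. x \<ge> a \<Longrightarrow> f' x \<ge> c" and "c > 0"
  shows "filterlim f at_top at_top"
proof (rule filterlim_at_top_mono)
  show "filterlim (\<lambda>x. (f a - c * a) + c * x) at_top at_top"
    by (intro filterlim_tendsto_add_at_top[OF tendsto_const]
        filterlim_tendsto_pos_mult_at_top[OF tendsto_const \<open>c > 0\<close> filterlim_ident])
  have "f a + c * (x - a) \<le> f x" if "a \<le> x" for x
    using that deriv ge by (intro DERIV_ge_imp_increment_ge) auto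
  then show "\<forall>\<^sub>F x in at_top. (f a - c * a) + c * x \<le> f x"
    by (intro eventually_at_top_linorderI[of a]) (simp add: algebra_simps)
qed

lemma DERIV_nonneg_somewhere_if_le_limit:
  fixes f f' :: "real \<Rightarrow> real"
  assumes deriv: "\<And>x. x \<ge> a \<Longrightarrow> (f has_real_derivative f' x) (at x)"
    and lim: "(f \<longlongrightarrow> L) at_top" and "f a \<le> L"
  shows "\<exists>x\<ge>a. 0 \<le> f' x"
proof (rule ccontr)
  assume no_nonneg: "\<not> (\<exists>x\<ge>a. 0 \<le> f' x)"
  have "L < f a"
  proof (rule DERIV_neg_imp_decreasing_at_top[OF _ lim])
    fix x assume "a \<le> x"
    then show "\<exists>y. (f has_real_derivative y) (at x) \<and> y < 0"
      using deriv[of x] no_nonneg by (metis not_le)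
  qed
  with \<open>f a \<le> L\<close> show False by simp
qed

lemma concave_slope_le_deriv_at_left_max:
  fixes v P :: "real \<Rightarrow> real"
  assumes concave: "concave_on I P" and deriv: "(v has_real_derivative v') (at m)"
    and "a < m" "m < t" "{a<..t} \<subseteq> I"
    and left_max: "\<And>x. a < x \<Longrightarrow> x < m \<Longrightarrow> v x - P x \<le> v m - P m"
  shows "P t - P m \<le> v' * (t - m)"
proof -
  have convex: "convex_on I (\<lambda>x. - P x)"
    using concave by (simp add: concave_on_def)
  have "(P t - P m) / (t - m) \<le> v'"
  proof (rule tendsto_lowerbound)
    show "((\<lambda>x. (v x - v m) / (x - m)) \<longlongrightarrow> v') (at_left m)"
      using deriv unfolding has_field_derivative_iff by (rule tendsto_mono[rotated]) (simp add: at_le)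
    have chord_le_difference_quotient:
      "(P t - P m) / (t - m) \<le> (v x - v m) / (x - m)" if "a < x" "x < m" for x
    proof -
      have I: "x \<in> I" "t \<in> I" using that \<open>m < t\<close> \<open>{a<..t} \<subseteq> I\<close> by auto
      have "(P t - P m) / (t - m) \<le> (P t - P x) / (t - x)"
        using convex_on_slope_le(2)[OF convex I that(2) \<open>m < t\<close>] that \<open>m < t\<close>
        by (simp add: divide_simps) (simp add: algebra_simps)
      also have "\<dots> \<le> (P m - P x) / (m - x)"
        using convex_on_slope_le(1)[OF convex I that(2) \<open>m < t\<close>] that \<open>m < t\<close>
        by (simp add: divide_simps) (simp add: algebra_simps)
      also have "\<dots> \<le> (v m - v x) / (m - x)"
        using left_max[OF that] that by (intro divide_right_mono) auto
      also have "\<dots> = (v x - v m) / (x - m)"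
        by (metis minus_diff_eq minus_divide_divide)
      finally show ?thesis .
    qed
    show "\<forall>\<^sub>F x in at_left m. (P t - P m) / (t - m) \<le> (v x - v m) / (x - m)"
      using eventually_at_left_real[OF \<open>a < m\<close>]
      by eventually_elim (auto intro: chord_le_difference_quotient)
  qed simp
  then show ?thesis
    using \<open>m < t\<close> by (simp add: divide_le_eq mult.commute)
qed

lemma convex_above_barrier_while_steeper:
  fixes v v' v'' P :: "real \<Rightarrow> real"
  assumes v': "\<And>x. x > Y \<Longrightarrow> (v has_real_derivative v' x) (at x)"
    and v'': "\<And>x. x > Y \<Longrightarrow> (v' has_real_derivative v'' x) (at x)"
    and convex_above: "\<And>x. x > Y \<Longrightarrow> v x > P x \<Longrightarrow> v' x \<ge> 0 \<Longrightarrow> v'' x > 0"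
    and m: "Y < m" "P m < v m" "0 \<le> v' m"
    and above_tangent_imp_above: "\<And>t. m < t \<Longrightarrow> v m + v' m * (t - m) \<le> v t \<Longrightarrow> P t < v t"
    and "m \<le> t" and steeper: "\<forall>x\<in>{m<..<t}. v' m < v' x"
  shows "0 < v'' t"
proof (cases "t = m")
  case False
  then have "m < t" using \<open>m \<le> t\<close> by simp
  have "v m + v' m * (t - m) \<le> v t"
  proof (rule DERIV_ge_imp_increment_ge[where f' = v'])
    show "(v has_real_derivative v' x) (at x)" if "m \<le> x" for x
      using m(1) that by (intro v') simp
    show "v' m \<le> v' x" if "m < x" "x < t" for x
      using steeper that by (simp add: less_imp_le)
  qed (use \<open>m < t\<close> in simp)
  then have "P t < v t"
    by (rule above_tangent_imp_above[OF \<open>m < t\<close>])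
  moreover have "v' m \<le> v' t"
  proof (rule tendsto_lowerbound)
    have "isCont v' t"
      using m(1) \<open>m < t\<close> by (intro DERIV_isCont[OF v'']) simp
    then show "(v' \<longlongrightarrow> v' t) (at_left t)"
      unfolding isCont_def by (rule tendsto_mono[rotated]) (simp add: at_le)
    show "\<forall>\<^sub>F x in at_left t. v' m \<le> v' x"
      using eventually_at_left_real[OF \<open>m < t\<close>]
      by eventually_elim (use steeper in \<open>auto intro: less_imp_le\<close>)
  qed simp
  ultimately show ?thesis using convex_above m \<open>m < t\<close> by auto
qed (use convex_above m in auto)

lemma convex_above_barrier_imp_filterlim_at_top:
  fixes v v' v'' P :: "real \<Rightarrow> real"
  assumes v': "\<And>x. x > Y \<Longrightarrow> (v has_real_derivative v' x) (at x)"
    and v'': "\<And>x. x > Y \<Longrightarrow> (v' has_real_derivative v'' x) (at x)"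
    and convex_above: "\<And>x. x > Y \<Longrightarrow> v x > P x \<Longrightarrow> v' x \<ge> 0 \<Longrightarrow> v'' x > 0"
    and m: "Y < m" "P m < v m" "0 \<le> v' m"
    and above_tangent_imp_above: "\<And>t. m < t \<Longrightarrow> v m + v' m * (t - m) \<le> v t \<Longrightarrow> P t < v t"
  shows "filterlim v at_top at_top"
proof -
  note convex_while_steeper =
    convex_above_barrier_while_steeper[OF v' v'' convex_above m above_tangent_imp_above]
  have v''_at: "(v' has_real_derivative v'' x) (at x)" if "m \<le> x" for x
    using m(1) that by (intro v'') simp
  have steeper: "v' m < v' t" if "m < t" for t
    using v''_at convex_while_steeper that by (rule DERIV_pos_while_above_imp_above)
  have "v' (m + 1) + 0 * (x - (m + 1)) \<le> v' x" if "m + 1 \<le> x" for x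
  proof (rule DERIV_ge_imp_increment_ge[OF that])
    show "0 \<le> v'' y" if "m + 1 < y" for y
      by (rule less_imp_le, rule convex_while_steeper) (use that steeper in auto)
  qed (use v''_at in simp)
  moreover have "0 < v' (m + 1)" using steeper[of "m + 1"] m(3) by simp
  ultimately show ?thesis
    using v' m(1) by (intro DERIV_ge_pos_imp_filterlim_at_top[of "m + 1" v v' "v' (m + 1)"]) auto
qed

lemma concave_barrier_crossing_point:
  fixes v v' P :: "real \<Rightarrow> real"
  assumes v': "\<And>x. x > Y \<Longrightarrow> (v has_real_derivative v' x) (at x)"
    and mono: "mono_on {Y<..} P" and concave: "concave_on {Y<..} P"
    and "Y < p0" "p0 \<le> p" "v p0 \<le> P p0" "P p < v p"
  obtains m where "Y < m" "P m < v m" "0 \<le> v' m" "\<And>t. m < t \<Longrightarrow> P t - P m \<le> v' m * (t - m)"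
proof -
  have "continuous_on {Y<..} (\<lambda>x. - P x)"
    using concave by (intro convex_on_continuous) (auto simp: concave_on_def)
  then have "continuous_on {Y<..} P"
    using continuous_on_minus by fastforce
  moreover have "continuous_on {Y<..} v"
    using v' by (intro continuous_at_imp_continuous_on) (auto intro: DERIV_isCont)
  ultimately have "continuous_on {p0..p} (\<lambda>x. v x - P x)"
    using \<open>Y < p0\<close> by (auto intro!: continuous_on_diff elim!: continuous_on_subset)
  then have "\<exists>m\<in>{p0..p}. \<forall>x\<in>{p0..p}. v x - P x \<le> v m - P m"
    using \<open>p0 \<le> p\<close> by (intro continuous_attains_sup[OF compact_Icc]) auto
  then obtain m where m: "m \<in> {p0..p}" "\<And>x. x \<in> {p0..p} \<Longrightarrow> v x - P x \<le> v m - P m"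
    by blast
  have "P m < v m"
    using m(2)[of p] \<open>p0 \<le> p\<close> \<open>P p < v p\<close> by simp
  then have "p0 < m"
    using m(1) \<open>v p0 \<le> P p0\<close> by (cases "m = p0") auto
  have tangent: "P t - P m \<le> v' m * (t - m)" if "m < t" for t
  proof (rule concave_slope_le_deriv_at_left_max[OF concave v'[of m] \<open>p0 < m\<close> that])
    show "{p0<..t} \<subseteq> {Y<..}" using \<open>Y < p0\<close> by auto
    show "v x - P x \<le> v m - P m" if "p0 < x" "x < m" for x
      using m that by auto
  qed (use \<open>Y < p0\<close> \<open>p0 < m\<close> in simp)
  have "Y < m" using \<open>Y < p0\<close> \<open>p0 < m\<close> by linarith
  then have "0 \<le> P (m + 1) - P m"
    using mono_onD[OF mono, of m "m + 1"] by simp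
  then have "0 \<le> v' m"
    using tangent[of "m + 1"] by simp
  show thesis
    using \<open>Y < m\<close> \<open>P m < v m\<close> \<open>0 \<le> v' m\<close> tangent by (rule that)
qed

lemma eventually_le_concave_barrier:
  fixes v v' v'' P :: "real \<Rightarrow> real"
  assumes v': "\<And>x. x > Y \<Longrightarrow> (v has_real_derivative v' x) (at x)"
    and v'': "\<And>x. x > Y \<Longrightarrow> (v' has_real_derivative v'' x) (at x)"
    and convex_above: "\<And>x. x > Y \<Longrightarrow> v x > P x \<Longrightarrow> v' x \<ge> 0 \<Longrightarrow> v'' x > 0"
    and lim: "(v \<longlongrightarrow> 1) at_top" and le_1: "eventually (\<lambda>x. v x \<le> 1) at_top"
    and mono: "mono_on {Y<..} P" and concave: "concave_on {Y<..} P"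
  shows "eventually (\<lambda>x. v x \<le> P x) at_top"
proof (rule ccontr)
  assume "\<not> ?thesis"
  then have frequently_above: "\<exists>x\<ge>N. P x < v x" for N
    by (auto simp: eventually_at_top_linorder not_le)
  obtain Z where Z: "Y < Z" "\<And>x. Z \<le> x \<Longrightarrow> v x \<le> 1"
    using eventually_conj[OF le_1 eventually_gt_at_top[of Y]]
    by (auto simp: eventually_at_top_linorder)
  obtain m where m: "Y < m" "P m < v m" "0 \<le> v' m"
    "\<And>t. m < t \<Longrightarrow> v m + v' m * (t - m) \<le> v t \<Longrightarrow> P t < v t"
  proof (cases "\<exists>p0\<ge>Z. v p0 \<le> P p0")
    case True
    then obtain p0 where "Z \<le> p0" "v p0 \<le> P p0" by blast
    moreover obtain p where "p0 \<le> p" "P p < v p" using frequently_above by blast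
    moreover have "Y < p0" using \<open>Z \<le> p0\<close> Z(1) by linarith
    ultimately obtain m where m: "Y < m" "P m < v m" "0 \<le> v' m"
      "\<And>t. m < t \<Longrightarrow> P t - P m \<le> v' m * (t - m)"
      using concave_barrier_crossing_point[OF v' mono concave] by blast
    show thesis
    proof (rule that[OF m(1-3)])
      show "P t < v t" if "m < t" "v m + v' m * (t - m) \<le> v t" for t
        using m(2) m(4)[OF that(1)] that(2) by linarith
    qed
  next
    case False
    then have above: "P x < v x" if "Z \<le> x" for x
      using that not_le by blast
    obtain m where "Z \<le> m" "0 \<le> v' m"
      using DERIV_nonneg_somewhere_if_le_limit[of Z v v' 1] v' Z lim by force
    with above Z(1) show thesis by (intro that[of m]) auto
  qed
  have "filterlim v at_top at_top"
    by (rule convex_above_barrier_imp_filterlim_at_top[OF v' v'' convex_above m])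
  then have "filterlim v at_infinity at_top"
    by (rule filterlim_at_top_imp_at_infinity)
  then show False
    using not_tendsto_and_filterlim_at_infinity[OF _ lim] by simp
qed

lemma ode_quotient_convex_above:
  fixes B A D e e' e'' u u' u'' :: real
  assumes "0 < e" "0 < u" "0 < B" "0 \<le> D"
    and ode: "0 = (1/2) * B * u'' + A * u' + e * u - u\<^sup>2 - D * u'\<^sup>2 / u"
    and abar: "A / e + (B - 2 * D) * e' / e\<^sup>2 \<le> 0"
    and above: "1 + ((1/2) * B * e'' + A * e') / e\<^sup>2 - D * e'\<^sup>2 / e ^ 3 < u / e"
    and increasing: "0 \<le> u' / e - u * e' / e\<^sup>2"
  shows "0 < u'' / e - 2 * u' * e' / e\<^sup>2 - u * e'' / e\<^sup>2 + 2 * u * e'\<^sup>2 / e ^ 3"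
proof -
  define v where "v = u / e"
  define w where "w = u' / e - u * e' / e\<^sup>2"
  define \<Psi> where "\<Psi> = 1 + ((1/2) * B * e'' + A * e') / e\<^sup>2 - D * e'\<^sup>2 / e ^ 3"
  define a where "a = A / e + (B - 2 * D) * e' / e\<^sup>2"
  have "B * u'' = 2 * (u\<^sup>2 + D * u'\<^sup>2 / u - A * u' - e * u)"
    using ode by (simp add: algebra_simps)
  then have identity: "B * (u'' / e - 2 * u' * e' / e\<^sup>2 - u * e'' / e\<^sup>2 + 2 * u * e'\<^sup>2 / e ^ 3)
      = 2 * e * (v * (v - \<Psi>) - a * w + D / e * w\<^sup>2 / v)"
    using \<open>0 < e\<close> \<open>0 < u\<close> unfolding v_def w_def \<Psi>_def a_def
    by (simp add: field_simps power2_eq_square power3_eq_cube) algebra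
  have "0 < v" using \<open>0 < e\<close> \<open>0 < u\<close> unfolding v_def by simp
  moreover have "\<Psi> < v" using above unfolding v_def \<Psi>_def .
  ultimately have "0 < v * (v - \<Psi>)" by simp
  moreover have "0 \<le> - a * w" using abar increasing unfolding a_def w_def
    by (simp add: mult_nonpos_nonneg)
  moreover have "0 \<le> D / e * w\<^sup>2 / v" using \<open>0 \<le> D\<close> \<open>0 < e\<close> \<open>0 < v\<close> by simp
  ultimately have "0 < 2 * e * (v * (v - \<Psi>) - a * w + D / e * w\<^sup>2 / v)"
    using \<open>0 < e\<close> by (intro mult_pos_pos) auto
  then show ?thesis
    using \<open>0 < B\<close> unfolding identity[symmetric] by (rule zero_less_mult_pos)
qed

lemma DERIV_quotient_second_order:
  fixes u u' e e' :: "real \<Rightarrow> real"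
  assumes u: "(u has_real_derivative u' y) (at y)" and u': "(u' has_real_derivative u'') (at y)"
    and e: "(e has_real_derivative e' y) (at y)" and e': "(e' has_real_derivative e'') (at y)"
    and "e y \<noteq> 0"
  shows "((\<lambda>x. u x / e x) has_real_derivative u' y / e y - u y * e' y / (e y)\<^sup>2) (at y)"
    and "((\<lambda>x. u' x / e x - u x * e' x / (e x)\<^sup>2) has_real_derivative
          u'' / e y - 2 * u' y * e' y / (e y)\<^sup>2 - u y * e'' / (e y)\<^sup>2 + 2 * u y * (e' y)\<^sup>2 / e y ^ 3) (at y)"
proof -
  show "((\<lambda>x. u x / e x) has_real_derivative u' y / e y - u y * e' y / (e y)\<^sup>2) (at y)"
    by (rule derivative_eq_intros u e \<open>e y \<noteq> 0\<close> refl)+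
      (use \<open>e y \<noteq> 0\<close> in \<open>simp add: field_simps power2_eq_square\<close>)
  show "((\<lambda>x. u' x / e x - u x * e' x / (e x)\<^sup>2) has_real_derivative
          u'' / e y - 2 * u' y * e' y / (e y)\<^sup>2 - u y * e'' / (e y)\<^sup>2 + 2 * u y * (e' y)\<^sup>2 / e y ^ 3) (at y)"
    by (rule derivative_eq_intros u u' e e' \<open>e y \<noteq> 0\<close> refl | simp add: \<open>e y \<noteq> 0\<close>)+
      (use \<open>e y \<noteq> 0\<close> in \<open>simp add: field_simps power2_eq_square power3_eq_cube; algebra\<close>)
qed

lemma d_fun_nonneg:
  assumes "0 < R" "-1 \<le> \<rho> y" "\<rho> y \<le> 1"
  shows "0 \<le> d_fun R b \<rho> y"
proof -
  have "(\<rho> y)\<^sup>2 \<le> 1" using assms(2,3) by (simp add: abs_square_le_1)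
  then show ?thesis
    unfolding d_fun_def using \<open>0 < R\<close> by (intro mult_nonneg_nonneg add_nonneg_nonneg) auto
qed

theorem proposition4p14:
  fixes Em :: ereal and R y0 :: real
    and r lam \<sigma> a b \<rho> \<delta> u :: "real \<Rightarrow> real"
  defines "E \<equiv> stateE Em"
    and "\<eta> \<equiv> eta_fun R \<delta> r lam"
    and "atl \<equiv> atilde_fun R a \<rho> lam b"
    and "d \<equiv> d_fun R b \<rho>"
  assumes Em: "Em \<noteq> PInfty"
    and lip: "loc_lipschitz_on E r" "loc_lipschitz_on E lam" "loc_lipschitz_on E \<sigma>"
             "loc_lipschitz_on E a" "loc_lipschitz_on E b" "loc_lipschitz_on E \<rho>"
             "loc_lipschitz_on E \<delta>"
    and sigma_pos: "\<forall>y\<in>E. \<sigma> y > 0"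
    and b_nz: "\<forall>y\<in>E. b y \<noteq> 0"
    and rho_bd: "\<forall>y\<in>E. -1 \<le> \<rho> y \<and> \<rho> y \<le> 1"
    and R: "R > 0" "R \<noteq> 1"
    and y0: "y0 \<in> E"
    \<comment> \<open>u is a positive C^2 solution of the ODE on (y0, infinity)\<close>
    and u_pos: "\<forall>y>y0. u y > 0"
    and u_diff: "\<forall>y>y0. u differentiable (at y) \<and> deriv u differentiable (at y)"
    and u_cont2: "continuous_on {y0<..} (deriv (deriv u))"
    and u_ode: "\<forall>y>y0. 0 = (1/2) * (b y)\<^sup>2 * deriv (deriv u) y + atl y * deriv u y
                         + \<eta> y * u y - (u y)\<^sup>2 - d y * (deriv u y)\<^sup>2 / u y"
    and u_lim: "((\<lambda>y. u y / \<eta> y) \<longlongrightarrow> 1) at_top"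
    and u_le: "eventually (\<lambda>y. u y \<le> \<eta> y) at_top"
    \<comment> \<open>eta is C^2 and positive on (y0, infinity)\<close>
    and eta_diff: "\<forall>y>y0. \<eta> differentiable (at y) \<and> deriv \<eta> differentiable (at y)"
    and eta_cont2: "continuous_on {y0<..} (deriv (deriv \<eta>))"
    and eta_pos: "\<forall>y>y0. \<eta> y > 0"
    and abar: "\<forall>y>y0. atl y / \<eta> y + ((b y)\<^sup>2 - 2 * d y) * deriv \<eta> y / (\<eta> y)\<^sup>2 \<le> 0"
    and Psi_mono: "mono_on {y0<..} (Psi_op b atl d \<eta>)"
    and Psi_concave: "concave_on {y0<..} (Psi_op b atl d \<eta>)"
  shows "eventually (\<lambda>y. u y \<le> \<eta> y * Psi_op b atl d \<eta> y) at_top"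
proof -
  let ?v = "\<lambda>y. u y / \<eta> y"
  let ?v' = "\<lambda>y. deriv u y / \<eta> y - u y * deriv \<eta> y / (\<eta> y)\<^sup>2"
  let ?v'' = "\<lambda>y. deriv (deriv u) y / \<eta> y - 2 * deriv u y * deriv \<eta> y / (\<eta> y)\<^sup>2
      - u y * deriv (deriv \<eta>) y / (\<eta> y)\<^sup>2 + 2 * u y * (deriv \<eta> y)\<^sup>2 / \<eta> y ^ 3"
  have in_E: "y \<in> E" if "y0 < y" for y
    using y0 that unfolding E_def stateE_def by (auto intro: order.strict_trans)
  have v': "(?v has_real_derivative ?v' y) (at y)"
    and v'': "(?v' has_real_derivative ?v'' y) (at y)" if "y0 < y" for y
    using DERIV_quotient_second_order[of u "deriv u" y "deriv (deriv u) y" \<eta> "deriv \<eta>" "deriv (deriv \<eta>) y"]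
      u_diff eta_diff eta_pos that
    by (auto simp: DERIV_deriv_iff_real_differentiable)
  \<comment> \<open>Of the hypotheses on the coefficients only b \<noteq> 0, -1 \<le> \<rho> \<le> 1 and R > 0 are needed:
    they give b^2 > 0 and d \<ge> 0.\<close>
  have convex_above: "0 < ?v'' y" if "y0 < y" "Psi_op b atl d \<eta> y < ?v y" "0 \<le> ?v' y" for y
  proof (rule ode_quotient_convex_above)
    show "0 < (b y)\<^sup>2" and "0 \<le> d y"
      using b_nz rho_bd R(1) in_E[OF that(1)] unfolding d_def by (auto intro: d_fun_nonneg)
  qed (use that u_pos eta_pos u_ode abar in \<open>auto simp: Psi_op_def\<close>)
  have "\<forall>\<^sub>F y in at_top. ?v y \<le> 1"
    using u_le eventually_gt_at_top[of y0] by eventually_elim (use eta_pos in auto)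
  with v' v'' convex_above u_lim have "\<forall>\<^sub>F y in at_top. ?v y \<le> Psi_op b atl d \<eta> y"
    using Psi_mono Psi_concave by (rule eventually_le_concave_barrier)
  then show ?thesis
    using eventually_gt_at_top[of y0] by eventually_elim (use eta_pos in \<open>auto simp: divide_le_eq mult.commute\<close>)
qed

end
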